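(* Let $N\ge 3$ and let $A=(A_n)_{n\in\mathbb{Z}_{2N}}\in\mathbb{R}^{2N}$ satisfy $\sum_{l=1}^N A_{2l}<\sum_{l=1}^N A_{2l-1}$. Define $\bar A=(\bar A_n)_{n\in\mathbb{Z}_{2N}}$ by, for each $n\in\mathbb{Z}_N$ (indices modulo $2N$), $$\bar A_{2n}=\min\Big(A_{2n+1},\ A_{2n}-\min_{0\le k\le N-1}\sum_{l=1}^{k}\big(A_{2(n-l)+1}-A_{2(n-l)}\big)\Big),\qquad \bar A_{2n+1}=A_{2n+1}+A_{2n+2}-\bar A_{2n}$$ (the empty sum for $k=0$ being $0$). For $1\le k\le N$ let $$H_k(A)=\min_{\substack{1\le i_1\triangleleft i_2\triangleleft\cdots\triangleleft i_k\le 2N\\ (i_1,i_k)\neq(1,2N)}}\big(A_{i_1}+\cdots+A_{i_k}\big),$$ and $H_{N+1}(A)=\sum_{i=1}^{2N}A_i$. Then $H_k(\bar A)=H_k(A)$ for all $1\le k\le N+1$.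
   Context: For integers $i,j$, $i\triangleleft j$ means $i+1<j$. The minimum in $H_k$ runs over index tuples $1\le i_1<\dots<i_k\le 2N$ with consecutive indices differing by at least $2$, excluding tuples with $i_1=1$ and $i_k=2N$ simultaneously. The map $A\mapsto\bar A$ is the time evolution of the tropical periodic Toda lattice on the phase space $\{A\in\mathbb{R}^{2N}:\sum_{l}A_{2l}<\sum_l A_{2l-1}\}$. *)

theory Defs
  imports Main "HOL.Real"
begin

text \<open>A vector A in R^{2N} is represented by a function nat => real; only the
values at 0..2N-1 matter. Component A_n (n an integer, taken modulo 2N) is
accessed via tidx.\<close>

definition tidx :: "nat \<Rightarrow> (nat \<Rightarrow> real) \<Rightarrow> int \<Rightarrow> real" where
  "tidx N A n = A (nat (n mod (2 * int N)))"

definition phase_space :: "nat \<Rightarrow> (nat \<Rightarrow> real) \<Rightarrow> bool" where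
  "phase_space N A \<longleftrightarrow>
     (\<Sum>l=1..N. tidx N A (2 * int l)) < (\<Sum>l=1..N. tidx N A (2 * int l - 1))"

definition bar_even :: "nat \<Rightarrow> (nat \<Rightarrow> real) \<Rightarrow> int \<Rightarrow> real" where
  "bar_even N A n = min (tidx N A (2*n+1))
     (tidx N A (2*n) - Min ((\<lambda>k. \<Sum>l=1..k. tidx N A (2*(n - int l)+1) - tidx N A (2*(n - int l))) ` {0..<N}))"

definition toda_step :: "nat \<Rightarrow> (nat \<Rightarrow> real) \<Rightarrow> nat \<Rightarrow> real" where
  "toda_step N A m =
     (let r = int m mod (2 * int N) in
      if even r then bar_even N A (r div 2)
      else tidx N A r + tidx N A (r + 1) - bar_even N A (r div 2))"

definition adm_sets :: "nat \<Rightarrow> nat \<Rightarrow> nat set set" where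
  "adm_sets N k = {I. I \<subseteq> {1..2*N} \<and> card I = k \<and>
       (\<forall>i\<in>I. \<forall>j\<in>I. i < j \<longrightarrow> i + 1 < j) \<and> \<not> (1 \<in> I \<and> 2*N \<in> I)}"

definition H :: "nat \<Rightarrow> nat \<Rightarrow> (nat \<Rightarrow> real) \<Rightarrow> real" where
  "H N k A = (if k = N + 1 then (\<Sum>i=1..2*N. tidx N A (int i))
              else Min ((\<lambda>I. \<Sum>i\<in>I. tidx N A (int i)) ` adm_sets N k))"

end

theory Submission
  imports Defs
begin

text \<open>
  Let m_j be the minimum over 0 \<le> k < N of the partial sums
  \<Sum>_{l=1..k} (A_{2(j-l)+1} - A_{2(j-l)}). The sum over a full period is positive on the
  phase space, so m_{j+1} = min 0 (A_{2j+1} - A_{2j} + m_j). Hence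
  Abar_{2j} = A_{2j} - m_j + m_{j+1} and Abar_{2j} \<le> A_{2j+1}, with equality when m_{j+1} < 0,
  while Abar_{2j+1} + Abar_{2j+2} = A_{2j+1} + A_{2j+2} + Abar_{2j+2} - Abar_{2j} telescopes
  around the cycle, which is the invariance of H_{N+1}.
  For k \<le> N the admissible index sets are the k-element independent sets of the cycle of
  length 2N. Moving every element of such a set one step back, except the even elements
  heading a run of even elements of the set, spaced by two, that ends at a zero of m,
  yields an independent set whose Abar-weight is at most the A-weight of the original one:
  moved elements do not gain weight by the inequalities above, and along each run of
  staying elements the m-terms telescope to a non-positive remainder. The mirror
  construction gives the reverse inequality.
\<close>

locale cyclic_shift =
  fixes P :: "'a set" and nxt prv :: "'a \<Rightarrow> 'a" and E :: "'a \<Rightarrow> bool"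
    and f g c :: "'a \<Rightarrow> 'b::ordered_ab_group_add"
  assumes finite_P: "finite P"
    and nxt_in: "p \<in> P \<Longrightarrow> nxt p \<in> P" and prv_in: "p \<in> P \<Longrightarrow> prv p \<in> P"
    and nxt_prv: "p \<in> P \<Longrightarrow> nxt (prv p) = p" and prv_nxt: "p \<in> P \<Longrightarrow> prv (nxt p) = p"
    and E_nxt2: "p \<in> P \<Longrightarrow> E p \<Longrightarrow> E (nxt (nxt p))"
    and c_nonneg: "p \<in> P \<Longrightarrow> E p \<Longrightarrow> 0 \<le> c p"
    and g_prv_le: "p \<in> P \<Longrightarrow> \<not> E p \<or> c p \<noteq> 0 \<Longrightarrow> g (prv p) \<le> f p"
    and g_telescope: "p \<in> P \<Longrightarrow> E p \<Longrightarrow> g p = f p + c p - c (nxt (nxt p))"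
begin

lemma nxt_inj: "p \<in> P \<Longrightarrow> q \<in> P \<Longrightarrow> nxt p = nxt q \<Longrightarrow> p = q"
  by (metis prv_nxt)

context
  fixes I assumes I_sub: "I \<subseteq> P" and I_indep: "\<And>i. i \<in> I \<Longrightarrow> nxt i \<notin> I"
begin

inductive stays :: "'a \<Rightarrow> bool" where
  stays_zero: "p \<in> I \<Longrightarrow> E p \<Longrightarrow> c p = 0 \<Longrightarrow> stays p"
| stays_step: "p \<in> I \<Longrightarrow> E p \<Longrightarrow> stays (prv (prv p)) \<Longrightarrow> stays p"

definition shift :: "'a \<Rightarrow> 'a" where
  "shift p = (if stays p then p else prv p)"

lemma stays_in: "stays p \<Longrightarrow> p \<in> I \<and> E p"
  by (cases rule: stays.cases) auto

lemma stays_nxt2: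
  assumes "stays p" "nxt (nxt p) \<in> I" shows "stays (nxt (nxt p))"
proof (rule stays_step)
  have "p \<in> P" "E p" using assms(1) stays_in I_sub by auto
  then show "E (nxt (nxt p))" by (rule E_nxt2)
  show "stays (prv (prv (nxt (nxt p))))"
    using assms(1) \<open>p \<in> P\<close> by (simp add: prv_nxt nxt_in)
qed (fact assms(2))

lemma stays_prv2: "stays p \<Longrightarrow> c p \<noteq> 0 \<Longrightarrow> stays (prv (prv p))"
  by (cases rule: stays.cases) auto

lemma shift_in: "p \<in> I \<Longrightarrow> shift p \<in> P"
  using I_sub prv_in by (auto simp: shift_def)

lemma inj_on_shift: "inj_on shift I"
proof (rule inj_onI)
  fix p q assume p: "p \<in> I" and q: "q \<in> I" and eq: "shift p = shift q"
  have P: "p \<in> P" "q \<in> P" using p q I_sub by auto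
  consider "stays p" "stays q" | "stays p" "\<not> stays q" | "\<not> stays p" "stays q"
    | "\<not> stays p" "\<not> stays q" by blast
  then show "p = q"
  proof cases
    case 1 then show ?thesis using eq by (simp add: shift_def)
  next
    case 2
    then have "nxt p = q" using eq nxt_prv[OF P(2)] by (simp add: shift_def)
    then show ?thesis using I_indep[OF p] q by simp
  next
    case 3
    then have "nxt q = p" using eq nxt_prv[OF P(1)] by (simp add: shift_def)
    then show ?thesis using I_indep[OF q] p by simp
  next
    case 4
    then have "prv p = prv q" using eq by (simp add: shift_def)
    then show ?thesis using nxt_prv[OF P(1)] nxt_prv[OF P(2)] by metis
  qed
qed

lemma shift_independent: "i \<in> shift ` I \<Longrightarrow> nxt i \<notin> shift ` I"
proof
  assume "i \<in> shift ` I" "nxt i \<in> shift ` I"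
  then obtain p q where p: "p \<in> I" "i = shift p" and q: "q \<in> I" "nxt i = shift q" by auto
  have P: "p \<in> P" "q \<in> P" using p q I_sub by auto
  show False
  proof (cases "stays p")
    case True
    with p have "i = p" by (simp add: shift_def)
    show False
    proof (cases "stays q")
      case True
      with q \<open>i = p\<close> have "nxt p = q" by (simp add: shift_def)
      then show False using I_indep[OF p(1)] q(1) by simp
    next
      case False
      with q \<open>i = p\<close> have "nxt p = prv q" by (simp add: shift_def)
      then have "q = nxt (nxt p)" using nxt_prv[OF P(2)] by simp
      with stays_nxt2[OF \<open>stays p\<close>] q(1) False show False by simp
    qed
  next
    case False
    with p have "nxt i = p" using nxt_prv[OF P(1)] by (simp add: shift_def)
    show False
    proof (cases "stays q")
      case True
      with q \<open>nxt i = p\<close> have "p = q" by (simp add: shift_def)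
      with True False show False by simp
    next
      case False
      with q \<open>nxt i = p\<close> have "p = prv q" by (simp add: shift_def)
      then have "nxt p = q" using nxt_prv[OF P(2)] by simp
      then show False using I_indep[OF p(1)] q(1) by simp
    qed
  qed
qed

lemma stays_subset: "Collect stays \<subseteq> I"
  using stays_in by blast

lemma finite_stays: "finite (Collect stays)"
  using stays_subset I_sub finite_P by (blast intro: finite_subset)

lemma sum_c_stays_le: "sum c (Collect stays) \<le> sum c ((\<lambda>p. nxt (nxt p)) ` Collect stays)"
  (is "sum c ?S \<le> sum c (?nn ` ?S)")
proof -
  have "sum c ?S = sum c (?S \<inter> ?nn ` ?S)"
  proof (rule sum.mono_neutral_right[OF finite_stays])
    show "\<forall>p \<in> ?S - ?S \<inter> ?nn ` ?S. c p = 0"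
    proof (rule ballI, rule ccontr)
      fix p assume p: "p \<in> ?S - ?S \<inter> ?nn ` ?S" and "c p \<noteq> 0"
      then have "stays (prv (prv p))" using stays_prv2 by blast
      moreover have "p \<in> P" using p stays_subset I_sub by blast
      then have "p = ?nn (prv (prv p))" by (simp add: nxt_prv prv_in)
      ultimately show False using p by blast
    qed
  qed blast
  also have "\<dots> \<le> sum c (?nn ` ?S)"
  proof (rule sum_mono2)
    show "finite (?nn ` ?S)" using finite_stays by simp
    show "0 \<le> c q" if q: "q \<in> ?nn ` ?S - ?S \<inter> ?nn ` ?S" for q
    proof -
      obtain p where "stays p" "q = ?nn p" using q by blast
      then have "p \<in> P" "E p" using stays_in I_sub by blast+
      then show ?thesis using \<open>q = ?nn p\<close> by (simp add: c_nonneg E_nxt2 nxt_in)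
    qed
  qed blast
  finally show ?thesis .
qed

lemma sum_shift_le: "sum g (shift ` I) \<le> sum f I"
proof -
  let ?S = "Collect stays" and ?nn = "\<lambda>p. nxt (nxt p)"
  have finI: "finite I" using I_sub finite_P finite_subset by blast
  have SI: "?S \<subseteq> I" by (rule stays_subset)
  have inj_nn: "inj_on ?nn ?S"
  proof (rule inj_onI)
    fix p q assume "p \<in> ?S" "q \<in> ?S" "?nn p = ?nn q"
    moreover have "p \<in> P" "q \<in> P" using calculation(1,2) SI I_sub by blast+
    ultimately show "p = q" by (blast intro: nxt_inj nxt_in)
  qed
  have stay_cost: "g (shift p) = f p + c p - c (?nn p)" if "p \<in> ?S" for p
    using that stays_in I_sub g_telescope by (auto simp: shift_def)
  have move_cost: "g (shift p) \<le> f p" if "p \<in> I - ?S" for p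
  proof -
    have "\<not> E p \<or> c p \<noteq> 0" using that stays_zero by blast
    then show ?thesis using that I_sub g_prv_le by (auto simp: shift_def)
  qed
  have "sum g (shift ` I) = sum (g \<circ> shift) ?S + sum (g \<circ> shift) (I - ?S)"
    using sum.reindex[OF inj_on_shift, of g] sum.subset_diff[OF SI finI, of "g \<circ> shift"]
    by (simp add: add.commute)
  also have "sum (g \<circ> shift) ?S = sum f ?S + (sum c ?S - sum c (?nn ` ?S))"
    using stay_cost sum.reindex[OF inj_nn, of c]
    by (simp add: sum.distrib sum_subtractf add_diff_eq)
  also have "\<dots> + sum (g \<circ> shift) (I - ?S) \<le> (sum f ?S + 0) + sum f (I - ?S)"
    using sum_c_stays_le move_cost by (intro add_mono sum_mono) auto
  also have "\<dots> = sum f I"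
    using sum.subset_diff[OF SI finI, of f] by (simp add: add.commute)
  finally show ?thesis .
qed

end

lemma independent_prv_iff:
  assumes "I \<subseteq> P" shows "(\<forall>i\<in>I. prv i \<notin> I) \<longleftrightarrow> (\<forall>i\<in>I. nxt i \<notin> I)"
proof
  show "\<forall>i\<in>I. nxt i \<notin> I" if "\<forall>i\<in>I. prv i \<notin> I"
    using that assms prv_nxt by (metis subsetD)
  show "\<forall>i\<in>I. prv i \<notin> I" if "\<forall>i\<in>I. nxt i \<notin> I"
    using that assms nxt_prv by (metis subsetD)
qed

lemma exists_cheaper_independent:
  assumes "I \<subseteq> P" and "\<And>i. i \<in> I \<Longrightarrow> nxt i \<notin> I"
  shows "\<exists>I' \<subseteq> P. card I' = card I \<and> (\<forall>i\<in>I'. nxt i \<notin> I') \<and> sum g I' \<le> sum f I"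
proof (intro exI conjI)
  show "shift I ` I \<subseteq> P" using shift_in[OF assms] by blast
  show "card (shift I ` I) = card I" using inj_on_shift[OF assms] by (rule card_image)
qed (use shift_independent[OF assms] sum_shift_le[OF assms] in auto)

end

lemma tidx_mod_cong: "x mod (2 * int N) = y mod (2 * int N) \<Longrightarrow> tidx N A x = tidx N A y"
  by (simp add: tidx_def)

lemma tidx_double_cong:
  assumes "j mod int N = j' mod int N"
  shows "tidx N A (2 * j + r) = tidx N A (2 * j' + r)"
proof (rule tidx_mod_cong, rule mod_add_cong)
  show "2 * j mod (2 * int N) = 2 * j' mod (2 * int N)"
    using assms by (simp add: mod_mult_mult1)
qed (rule refl)

lemma div_two_mod: "(x :: int) div 2 mod int N = x mod (2 * int N) div 2"
  using mod_mult2_eq'[of x 2 N] by simp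

definition gap :: "nat \<Rightarrow> (nat \<Rightarrow> real) \<Rightarrow> int \<Rightarrow> real" where
  "gap N A j = tidx N A (2 * j + 1) - tidx N A (2 * j)"

definition gap_sum :: "nat \<Rightarrow> (nat \<Rightarrow> real) \<Rightarrow> int \<Rightarrow> nat \<Rightarrow> real" where
  "gap_sum N A j k = (\<Sum>l=1..k. gap N A (j - int l))"

definition min_gap_sum :: "nat \<Rightarrow> (nat \<Rightarrow> real) \<Rightarrow> int \<Rightarrow> real" where
  "min_gap_sum N A j = Min (gap_sum N A j ` {0..<N})"

lemma bar_even_min_gap_sum:
  "bar_even N A j = min (tidx N A (2 * j + 1)) (tidx N A (2 * j) - min_gap_sum N A j)"
  by (simp add: bar_even_def min_gap_sum_def gap_sum_def gap_def)

lemma gap_cong: "j mod int N = j' mod int N \<Longrightarrow> gap N A j = gap N A j'"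
  using tidx_double_cong[of j N j' A 1] tidx_double_cong[of j N j' A 0] by (simp add: gap_def)

lemma min_gap_sum_cong:
  assumes "j mod int N = j' mod int N" shows "min_gap_sum N A j = min_gap_sum N A j'"
proof -
  have "gap_sum N A j k = gap_sum N A j' k" for k
    unfolding gap_sum_def using assms by (intro sum.cong refl gap_cong mod_diff_cong) simp
  then show ?thesis by (simp add: min_gap_sum_def)
qed

lemma bar_even_cong: "j mod int N = j' mod int N \<Longrightarrow> bar_even N A j = bar_even N A j'"
  using tidx_double_cong[of j N j' A 1] tidx_double_cong[of j N j' A 0] min_gap_sum_cong[of j N j' A]
  by (simp add: bar_even_min_gap_sum)

lemma gap_sum_Suc_shift: "gap_sum N A (j + 1) (Suc k) = gap N A j + gap_sum N A j k"
proof (induction k)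
  case (Suc k)
  have "gap N A (j + 1 - int (Suc (Suc k))) = gap N A (j - int (Suc k))"
    by (simp add: algebra_simps)
  with Suc show ?case by (simp add: gap_sum_def)
qed (simp add: gap_sum_def)

lemma gap_sum_period:
  assumes "N > 0" shows "gap_sum N A j N = gap_sum N A 0 N"
proof -
  have step: "gap_sum N A (i + 1) N = gap_sum N A i N" for i
  proof -
    obtain n where n: "N = Suc n" using assms by (cases N) auto
    have "gap N A (i - int N) = gap N A i" by (rule gap_cong) simp
    then show ?thesis using gap_sum_Suc_shift[of N A i n] n by (simp add: gap_sum_def)
  qed
  show ?thesis
  proof (induction j rule: int_induct[where k = 0])
    case (step2 i) then show ?case using step[of "i - 1"] by simp
  qed (simp_all add: step)
qed

lemma phase_space_iff_gap_sum:
  assumes "N > 0" shows "phase_space N A \<longleftrightarrow> 0 < (\<Sum>j<N. gap N A (int j))"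
proof -
  have odd_sum: "(\<Sum>l=1..N. tidx N A (2 * int l - 1)) = (\<Sum>j<N. tidx N A (2 * int j + 1))"
    by (simp add: sum.atLeast1_atMost_eq[of _ N, simplified] algebra_simps)
  have "(\<Sum>j<N. tidx N A (2 * int (Suc j)) - tidx N A (2 * int j)) = 0"
    using sum_lessThan_telescope[of "\<lambda>j. tidx N A (2 * int j)" N]
      tidx_mod_cong[of "2 * int N" N 0 A] by simp
  then have even_sum: "(\<Sum>l=1..N. tidx N A (2 * int l)) = (\<Sum>j<N. tidx N A (2 * int j))"
    by (simp add: sum.atLeast1_atMost_eq[of _ N, simplified] sum_subtractf)
  show ?thesis
    unfolding phase_space_def odd_sum even_sum by (simp add: gap_def sum_subtractf)
qed

lemma gap_sum_period_pos:
  assumes "N > 0" and "phase_space N A" shows "0 < gap_sum N A j N"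
proof -
  have "gap_sum N A j N = gap_sum N A (int N) N"
    using gap_sum_period[OF assms(1)] by metis
  also have "\<dots> = (\<Sum>l=1..N. gap N A (int (l - 1)))"
    unfolding gap_sum_def by (subst sum.atLeastAtMost_rev) (auto intro!: sum.cong simp: of_nat_diff)
  also have "\<dots> = (\<Sum>j<N. gap N A (int j))"
    by (simp add: sum.atLeast1_atMost_eq[of _ N, simplified])
  finally show ?thesis using assms by (simp add: phase_space_iff_gap_sum)
qed

lemma min_gap_sum_nonpos: "N > 0 \<Longrightarrow> min_gap_sum N A j \<le> 0"
  unfolding min_gap_sum_def by (rule Min_le) (auto intro!: image_eqI[where x = 0] simp: gap_sum_def)

lemma min_gap_sum_step:
  assumes "N > 0" and "phase_space N A"
  shows "min_gap_sum N A (j + 1) = min 0 (gap N A j + min_gap_sum N A j)"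
proof -
  let ?m = "min_gap_sum N A j"
  have fin: "finite (gap_sum N A j ` {0..<N})" and ne: "gap_sum N A j ` {0..<N} \<noteq> {}"
    using assms(1) by auto
  obtain k0 where k0: "k0 < N" "?m = gap_sum N A j k0"
    using Min_in[OF fin ne] unfolding min_gap_sum_def by auto
  have m_le: "?m \<le> gap_sum N A j k" if "k < N" for k
    unfolding min_gap_sum_def using that by (intro Min_le) auto
  show ?thesis unfolding min_gap_sum_def[of N A "j + 1"]
  proof (rule Min_eqI)
    fix y assume "y \<in> gap_sum N A (j + 1) ` {0..<N}"
    then obtain k where k: "k < N" "y = gap_sum N A (j + 1) k" by auto
    show "min 0 (gap N A j + ?m) \<le> y"
    proof (cases k)
      case 0
      then show ?thesis using k by (simp add: gap_sum_def)
    next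
      case (Suc k')
      then have "gap N A j + ?m \<le> y" using k m_le[of k'] by (simp add: gap_sum_Suc_shift)
      then show ?thesis by (rule min.coboundedI2)
    qed
  next
    show "min 0 (gap N A j + ?m) \<in> gap_sum N A (j + 1) ` {0..<N}"
    proof (cases "0 \<le> gap N A j + ?m")
      case True
      then show ?thesis using assms(1) by (auto intro!: image_eqI[where x = 0] simp: gap_sum_def)
    next
      case False
      have "gap N A j + ?m = gap_sum N A (j + 1) (Suc k0)" using k0 by (simp add: gap_sum_Suc_shift)
      \<comment> \<open>the phase-space condition enters here\<close>
      moreover have "Suc k0 \<noteq> N" using False gap_sum_period_pos[OF assms, of "j + 1"] calculation by auto
      ultimately show ?thesis using False k0(1) by (auto intro!: image_eqI[where x = "Suc k0"])
    qed
  qed simp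
qed

lemma bar_even_telescope:
  assumes "N > 0" and "phase_space N A"
  shows "bar_even N A j = tidx N A (2 * j) - min_gap_sum N A j + min_gap_sum N A (j + 1)"
  using min_gap_sum_step[OF assms, of j] by (simp add: bar_even_min_gap_sum gap_def)

lemma bar_even_le: "bar_even N A j \<le> tidx N A (2 * j + 1)"
  by (simp add: bar_even_min_gap_sum)

lemma bar_even_eq_odd:
  assumes "N > 0" and "phase_space N A" and "min_gap_sum N A (j + 1) < 0"
  shows "bar_even N A j = tidx N A (2 * j + 1)"
  using min_gap_sum_step[OF assms(1,2), of j] assms(3) by (simp add: bar_even_min_gap_sum gap_def)

lemma tidx_toda_step:
  assumes "N > 0"
  shows "tidx N (toda_step N A) x = (if even x then bar_even N A (x div 2)
           else tidx N A x + tidx N A (x + 1) - bar_even N A (x div 2))"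
proof -
  let ?r = "x mod (2 * int N)"
  have r: "int (nat ?r) mod (2 * int N) = ?r" using assms by simp
  have "even ?r = even x" using dvd_mod_iff[of 2 "2 * int N" x] by simp
  moreover have "bar_even N A (?r div 2) = bar_even N A (x div 2)"
    by (rule bar_even_cong) (simp add: div_two_mod)
  moreover have "tidx N A ?r = tidx N A x" "tidx N A (?r + 1) = tidx N A (x + 1)"
    by (auto intro: tidx_mod_cong simp: mod_add_left_eq)
  ultimately show ?thesis
    unfolding tidx_def[of N "toda_step N A"] toda_step_def Let_def r by simp
qed

lemma tidx_toda_step_even: "N > 0 \<Longrightarrow> tidx N (toda_step N A) (2 * j) = bar_even N A j"
  by (simp add: tidx_toda_step)

lemma tidx_toda_step_odd:
  "N > 0 \<Longrightarrow> tidx N (toda_step N A) (2 * j + 1)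
     = tidx N A (2 * j + 1) + tidx N A (2 * j + 2) - bar_even N A j"
  by (simp add: tidx_toda_step add.assoc)

definition cyc_next :: "nat \<Rightarrow> nat \<Rightarrow> nat" where
  "cyc_next N p = (if p = 2 * N then 1 else p + 1)"

definition cyc_prev :: "nat \<Rightarrow> nat \<Rightarrow> nat" where
  "cyc_prev N p = (if p = 1 then 2 * N else p - 1)"

lemma cyc_next_mod: "int (cyc_next N p) mod (2 * int N) = (int p + 1) mod (2 * int N)"
  by (auto simp: cyc_next_def add.commute)

lemma cyc_prev_mod: "p \<ge> 1 \<Longrightarrow> int (cyc_prev N p) mod (2 * int N) = (int p - 1) mod (2 * int N)"
  by (auto simp: cyc_prev_def of_nat_diff)

lemma cyc_next2_mod: "int (cyc_next N (cyc_next N p)) mod (2 * int N) = (int p + 2) mod (2 * int N)"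
  by (metis cyc_next_mod mod_add_left_eq add.assoc one_add_one)

lemma cyc_prev2_mod:
  "p \<in> {1..2 * N} \<Longrightarrow> int (cyc_prev N (cyc_prev N p)) mod (2 * int N) = (int p - 2) mod (2 * int N)"
  by (auto simp: cyc_prev_def of_nat_diff zmod_minus1)

lemma independent_cyc_next_iff:
  assumes "I \<subseteq> {1..2 * N}"
  shows "(\<forall>i\<in>I. cyc_next N i \<notin> I) \<longleftrightarrow>
    (\<forall>i\<in>I. \<forall>j\<in>I. i < j \<longrightarrow> i + 1 < j) \<and> \<not> (1 \<in> I \<and> 2 * N \<in> I)"
proof
  assume indep: "\<forall>i\<in>I. cyc_next N i \<notin> I"
  have "i + 1 < j" if "i \<in> I" "j \<in> I" "i < j" for i j
  proof (rule ccontr)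
    assume "\<not> i + 1 < j"
    then have "cyc_next N i = j" using that assms by (auto simp: cyc_next_def)
    then show False using indep that by blast
  qed
  moreover have "cyc_next N (2 * N) = 1" by (simp add: cyc_next_def)
  ultimately show "(\<forall>i\<in>I. \<forall>j\<in>I. i < j \<longrightarrow> i + 1 < j) \<and> \<not> (1 \<in> I \<and> 2 * N \<in> I)"
    using indep by metis
next
  assume "(\<forall>i\<in>I. \<forall>j\<in>I. i < j \<longrightarrow> i + 1 < j) \<and> \<not> (1 \<in> I \<and> 2 * N \<in> I)"
  then show "\<forall>i\<in>I. cyc_next N i \<notin> I"
    by (auto simp: cyc_next_def split: if_splits)
qed

lemma adm_sets_iff:
  "I \<in> adm_sets N k \<longleftrightarrow> I \<subseteq> {1..2 * N} \<and> card I = k \<and> (\<forall>i\<in>I. cyc_next N i \<notin> I)"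
  using independent_cyc_next_iff[of I N] by (auto simp: adm_sets_def)

lemma min_gap_sum_half_cong:
  assumes "x mod (2 * int N) = y mod (2 * int N)"
  shows "min_gap_sum N A (x div 2 + d) = min_gap_sum N A (y div 2 + d)"
  using assms by (intro min_gap_sum_cong mod_add_cong) (simp_all add: div_two_mod)

lemma cyclic_shift_toda_forward:
  assumes N: "N > 0" and ps: "phase_space N A"
  shows "cyclic_shift {1..2 * N} (cyc_next N) (cyc_prev N) even
    (\<lambda>p. tidx N A (int p)) (\<lambda>p. tidx N (toda_step N A) (int p))
    (\<lambda>p. - min_gap_sum N A (int p div 2))"
proof
  show "finite {1..2 * N}" by simp
  fix p assume p: "p \<in> {1..2 * N}"
  show "cyc_next N p \<in> {1..2 * N}" "cyc_prev N p \<in> {1..2 * N}"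
    "cyc_next N (cyc_prev N p) = p" "cyc_prev N (cyc_next N p) = p"
    using p by (auto simp: cyc_next_def cyc_prev_def)
  show "even p \<Longrightarrow> even (cyc_next N (cyc_next N p))"
    using p by (auto simp: cyc_next_def)
  show "even p \<Longrightarrow> 0 \<le> - min_gap_sum N A (int p div 2)"
    using min_gap_sum_nonpos[OF N] by simp
  have T_prv: "tidx N (toda_step N A) (int (cyc_prev N p)) = tidx N (toda_step N A) (int p - 1)"
    using p by (intro tidx_mod_cong) (simp add: cyc_prev_mod)
  show "tidx N (toda_step N A) (int (cyc_prev N p)) \<le> tidx N A (int p)"
    if "\<not> even p \<or> - min_gap_sum N A (int p div 2) \<noteq> 0"
  proof (cases "even p")
    case True
    define j where "j = int p div 2 - 1"
    have p_eq: "int p = 2 * j + 2" using True by (simp add: j_def)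
    have "min_gap_sum N A (j + 1) < 0"
      using that True min_gap_sum_nonpos[OF N, of A "j + 1"] by (simp add: j_def less_le)
    then have "bar_even N A j = tidx N A (2 * j + 1)" by (rule bar_even_eq_odd[OF N ps])
    then show ?thesis using T_prv tidx_toda_step_odd[OF N, of A j] p_eq by (simp add: add.commute)
  next
    case False
    define j where "j = int p div 2"
    have p_eq: "int p = 2 * j + 1" using False by (simp add: j_def)
    show ?thesis using T_prv tidx_toda_step_even[OF N, of A j] bar_even_le[of N A j] p_eq by simp
  qed
  show "tidx N (toda_step N A) (int p)
      = tidx N A (int p) + - min_gap_sum N A (int p div 2)
        - - min_gap_sum N A (int (cyc_next N (cyc_next N p)) div 2)" if "even p"
  proof -
    define j where "j = int p div 2"
    have p_eq: "int p = 2 * j" using that by (simp add: j_def)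
    have "min_gap_sum N A (int (cyc_next N (cyc_next N p)) div 2) = min_gap_sum N A (int p div 2 + 1)"
      using min_gap_sum_half_cong[where d = 0, OF cyc_next2_mod] by simp
    then show ?thesis
      using tidx_toda_step_even[OF N, of A j] bar_even_telescope[OF N ps, of j] p_eq by simp
  qed
qed

lemma cyclic_shift_toda_backward:
  assumes N: "N > 0" and ps: "phase_space N A"
  shows "cyclic_shift {1..2 * N} (cyc_prev N) (cyc_next N) even
    (\<lambda>p. tidx N (toda_step N A) (int p)) (\<lambda>p. tidx N A (int p))
    (\<lambda>p. - min_gap_sum N A (int p div 2 + 1))"
proof
  show "finite {1..2 * N}" by simp
  fix p assume p: "p \<in> {1..2 * N}"
  show "cyc_next N p \<in> {1..2 * N}" "cyc_prev N p \<in> {1..2 * N}"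
    "cyc_next N (cyc_prev N p) = p" "cyc_prev N (cyc_next N p) = p"
    using p by (auto simp: cyc_next_def cyc_prev_def)
  show "even p \<Longrightarrow> even (cyc_prev N (cyc_prev N p))"
    using p by (auto simp: cyc_prev_def)
  show "even p \<Longrightarrow> 0 \<le> - min_gap_sum N A (int p div 2 + 1)"
    using min_gap_sum_nonpos[OF N] by simp
  have A_nxt: "tidx N A (int (cyc_next N p)) = tidx N A (int p + 1)"
    by (intro tidx_mod_cong) (simp add: cyc_next_mod)
  show "tidx N A (int (cyc_next N p)) \<le> tidx N (toda_step N A) (int p)"
    if "\<not> even p \<or> - min_gap_sum N A (int p div 2 + 1) \<noteq> 0"
  proof (cases "even p")
    case True
    define j where "j = int p div 2"
    have p_eq: "int p = 2 * j" using True by (simp add: j_def)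
    have "min_gap_sum N A (j + 1) < 0"
      using that True min_gap_sum_nonpos[OF N, of A "j + 1"] by (simp add: j_def less_le)
    then have "bar_even N A j = tidx N A (2 * j + 1)" by (rule bar_even_eq_odd[OF N ps])
    then show ?thesis using A_nxt tidx_toda_step_even[OF N, of A j] p_eq by simp
  next
    case False
    define j where "j = int p div 2"
    have p_eq: "int p = 2 * j + 1" using False by (simp add: j_def)
    show ?thesis
      using A_nxt tidx_toda_step_odd[OF N, of A j] bar_even_le[of N A j] p_eq by (simp add: add.assoc)
  qed
  show "tidx N A (int p)
      = tidx N (toda_step N A) (int p) + - min_gap_sum N A (int p div 2 + 1)
        - - min_gap_sum N A (int (cyc_prev N (cyc_prev N p)) div 2 + 1)" if "even p"
  proof -
    define j where "j = int p div 2"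
    have p_eq: "int p = 2 * j" using that by (simp add: j_def)
    have "min_gap_sum N A (int (cyc_prev N (cyc_prev N p)) div 2 + 1)
        = min_gap_sum N A ((int p - 2) div 2 + 1)"
      using min_gap_sum_half_cong[OF cyc_prev2_mod[OF p]] by simp
    then show ?thesis
      using tidx_toda_step_even[OF N, of A j] bar_even_telescope[OF N ps, of j] p_eq by simp
  qed
qed

lemma exists_adm_set_toda_step_le:
  assumes "N > 0" and "phase_space N A" and "I \<in> adm_sets N k"
  shows "\<exists>I'\<in>adm_sets N k. (\<Sum>i\<in>I'. tidx N (toda_step N A) (int i)) \<le> (\<Sum>i\<in>I. tidx N A (int i))"
proof -
  interpret cyclic_shift "{1..2 * N}" "cyc_next N" "cyc_prev N" even
    "\<lambda>p. tidx N A (int p)" "\<lambda>p. tidx N (toda_step N A) (int p)"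
    "\<lambda>p. - min_gap_sum N A (int p div 2)"
    using assms(1,2) by (rule cyclic_shift_toda_forward)
  have I: "I \<subseteq> {1..2 * N}" "\<And>i. i \<in> I \<Longrightarrow> cyc_next N i \<notin> I" "card I = k"
    using assms(3) by (simp_all add: adm_sets_iff)
  obtain I' where "I' \<subseteq> {1..2 * N}" "card I' = card I" "\<forall>i\<in>I'. cyc_next N i \<notin> I'"
      and cheaper: "(\<Sum>i\<in>I'. tidx N (toda_step N A) (int i)) \<le> (\<Sum>i\<in>I. tidx N A (int i))"
    using exists_cheaper_independent[OF I(1,2)] by blast
  then have "I' \<in> adm_sets N k" using I(3) by (simp add: adm_sets_iff)
  with cheaper show ?thesis by blast
qed

lemma exists_adm_set_le_toda_step:
  assumes "N > 0" and "phase_space N A" and "I \<in> adm_sets N k"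
  shows "\<exists>I'\<in>adm_sets N k. (\<Sum>i\<in>I'. tidx N A (int i)) \<le> (\<Sum>i\<in>I. tidx N (toda_step N A) (int i))"
proof -
  interpret cyclic_shift "{1..2 * N}" "cyc_prev N" "cyc_next N" even
    "\<lambda>p. tidx N (toda_step N A) (int p)" "\<lambda>p. tidx N A (int p)"
    "\<lambda>p. - min_gap_sum N A (int p div 2 + 1)"
    using assms(1,2) by (rule cyclic_shift_toda_backward)
  have I: "I \<subseteq> {1..2 * N}" "\<forall>i\<in>I. cyc_next N i \<notin> I" "card I = k"
    using assms(3) by (simp_all add: adm_sets_iff)
  then have "\<forall>i\<in>I. cyc_prev N i \<notin> I" using independent_prv_iff by blast
  then obtain I' where I': "I' \<subseteq> {1..2 * N}" "card I' = card I" "\<forall>i\<in>I'. cyc_prev N i \<notin> I'"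
      and cheaper: "(\<Sum>i\<in>I'. tidx N A (int i)) \<le> (\<Sum>i\<in>I. tidx N (toda_step N A) (int i))"
    using exists_cheaper_independent[OF I(1)] by blast
  then have "I' \<in> adm_sets N k" using I(3) independent_prv_iff[OF I'(1)] by (simp add: adm_sets_iff)
  with cheaper show ?thesis by blast
qed

lemma Min_image_le_if_dominated:
  fixes f g :: "'a \<Rightarrow> 'b::linorder"
  assumes "finite S" and "S \<noteq> {}" and "\<And>x. x \<in> S \<Longrightarrow> \<exists>y\<in>S. g y \<le> f x"
  shows "Min (g ` S) \<le> Min (f ` S)"
proof -
  have "Min (f ` S) \<in> f ` S" using assms(1,2) by (intro Min_in) auto
  then obtain x where x: "x \<in> S" "Min (f ` S) = f x" by blast
  then obtain y where y: "y \<in> S" "g y \<le> f x" using assms(3) by blast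
  have "Min (g ` S) \<le> g y" using assms(1) y(1) by (intro Min_le) auto
  then show ?thesis using x(2) y(2) by simp
qed

lemma adm_sets_nonempty:
  assumes "k \<le> N" shows "adm_sets N k \<noteq> {}"
proof -
  let ?I = "(\<lambda>i. 2 * i) ` {1..k}"
  have "?I \<subseteq> {1..2 * N}" using assms by auto
  moreover have "card ?I = k" by (simp add: card_image inj_on_def)
  moreover have "\<forall>i\<in>?I. odd (cyc_next N i)" by (auto simp: cyc_next_def)
  then have "\<forall>i\<in>?I. cyc_next N i \<notin> ?I" by auto
  ultimately have "?I \<in> adm_sets N k" by (simp add: adm_sets_iff)
  then show ?thesis by blast
qed

lemma finite_adm_sets: "finite (adm_sets N k)"
  by (rule finite_subset[of _ "Pow {1..2 * N}"]) (auto simp: adm_sets_def)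

lemma H_toda_step_adm:
  assumes "N > 0" and "phase_space N A" and "k \<le> N"
  shows "H N k (toda_step N A) = H N k A"
proof -
  have H: "H N k X = Min ((\<lambda>I. \<Sum>i\<in>I. tidx N X (int i)) ` adm_sets N k)" for X
    using assms(3) by (simp add: H_def)
  show ?thesis unfolding H
    using Min_image_le_if_dominated[OF finite_adm_sets adm_sets_nonempty[OF assms(3)]]
      exists_adm_set_toda_step_le[OF assms(1,2)] exists_adm_set_le_toda_step[OF assms(1,2)]
    by (intro antisym) blast+
qed

lemma sum_pairs:
  fixes h :: "int \<Rightarrow> 'a::comm_monoid_add"
  shows "(\<Sum>i=1..2 * n. h (int i)) = (\<Sum>j<n. h (2 * int j + 1) + h (2 * int j + 2))"
proof (induction n)
  case (Suc n)
  have "(\<Sum>i=1..2 * Suc n. h (int i)) = (\<Sum>i=1..2 * n. h (int i)) + (h (2 * int n + 1) + h (2 * int n + 2))"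
    by (simp add: ac_simps)
  with Suc show ?case by simp
qed simp

lemma H_toda_step_total:
  assumes "N > 0" and "phase_space N A"
  shows "H N (N + 1) (toda_step N A) = H N (N + 1) A"
proof -
  let ?b = "\<lambda>j. bar_even N A (int j)"
  have pair: "tidx N (toda_step N A) (2 * int j + 1) + tidx N (toda_step N A) (2 * int j + 2)
      = tidx N A (2 * int j + 1) + tidx N A (2 * int j + 2) + (?b (Suc j) - ?b j)" for j
    using tidx_toda_step_odd[OF assms(1), of A "int j"] tidx_toda_step_even[OF assms(1), of A "int j + 1"]
    by (simp add: algebra_simps)
  have telescope: "(\<Sum>j<N. ?b (Suc j) - ?b j) = 0"
    using sum_lessThan_telescope[of ?b N] bar_even_cong[of "int N" N 0 A] by simp
  have "(\<Sum>i=1..2 * N. tidx N (toda_step N A) (int i))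
      = (\<Sum>j<N. tidx N A (2 * int j + 1) + tidx N A (2 * int j + 2) + (?b (Suc j) - ?b j))"
    unfolding sum_pairs pair ..
  also have "\<dots> = (\<Sum>i=1..2 * N. tidx N A (int i))"
    unfolding sum.distrib telescope sum_pairs by simp
  finally show ?thesis by (simp add: H_def)
qed

theorem mainTheorem3:
  fixes N :: nat and A :: "nat \<Rightarrow> real"
  assumes "N \<ge> 3"
    and "phase_space N A"
  shows "\<forall>k\<in>{1..N+1}. H N k (toda_step N A) = H N k A"
proof
  fix k assume "k \<in> {1..N+1}"
  moreover have "N > 0" using assms(1) by simp
  ultimately show "H N k (toda_step N A) = H N k A"
    using H_toda_step_adm H_toda_step_total assms(2) by (cases "k = N + 1") auto
qed

end
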